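(* Fix $s,b\ge1$ and let $\{a_i\}$ be the $(s,b)$-Generacci sequence, with $a_i=0$ for $i\le0$. For $n,k\ge0$ let $p_{n,k}$ be the number of $m\in[a_{(n-1)b+1},a_{nb+1})$ whose legal decomposition has exactly $k$ summands, and $q_{n,k}$ the number of $m\in[0,a_{nb+1})$ whose legal decomposition has exactly $k$ summands. Then \[p_{n,k}=\begin{cases}1 & n=k=0,\\ b & 1\le n\le s,\ k=1,\\ b\,q_{n-(s+1),k-1} & n\ge s+1,\ 1\le k\le \frac{n+s}{s+1},\\ 0&\text{otherwise.}\end{cases}\] Moreover, with $n_*=\lceil\frac{n+s}{s+1}\rceil$, the generating function $F(x,y)=\sum_{n\ge0}\sum_{k=0}^{n_*}p_{n,k}x^ny^k$ equals \[F(x,y)=1+\frac{byx}{1-x-byx^{s+1}}.\]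
   Context: Fix integers $s,b\ge1$. For an increasing sequence of positive integers $\{a_i\}_{i\ge1}$ define bins $\mathcal{B}_n=\{a_{b(n-1)+1},\dots,a_{bn}\}$ for $n\ge1$, $\mathcal{B}_j=\emptyset$ for $j\le0$. A decomposition $m=a_{\ell_1}+\dots+a_{\ell_k}$ with $a_{\ell_1}>\dots>a_{\ell_k}$ is an $(s,b)$-Generacci legal decomposition if $\{a_{\ell_i},a_{\ell_{i+1}}\}\not\subset\mathcal{B}_{j-s}\cup\dots\cup\mathcal{B}_j$ for all $i,j$. The $(s,b)$-Generacci sequence is the increasing sequence in which each $a_i$ is the smallest positive integer with no legal decomposition using $a_1,\dots,a_{i-1}$; every nonnegative integer has a unique legal decomposition ($0$ being the empty sum). *)

theory Defs
  imports Main "HOL-Computational_Algebra.Formal_Power_Series"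
begin

text \<open>The sequence is a function a :: nat => nat, of which only the values
  at indices i >= 1 are relevant.  Extension by 0 to all integer indices i <= 0:\<close>
definition gen_at :: "(nat \<Rightarrow> nat) \<Rightarrow> int \<Rightarrow> nat" where
  "gen_at a i = (if i \<le> 0 then 0 else a (nat i))"

definition gbin :: "nat \<Rightarrow> (nat \<Rightarrow> nat) \<Rightarrow> int \<Rightarrow> nat set" where
  "gbin b a n = (if n \<le> 0 then {}
     else {a i | i. int b * (n - 1) + 1 \<le> int i \<and> int i \<le> int b * n})"

definition legal_dec :: "nat \<Rightarrow> nat \<Rightarrow> (nat \<Rightarrow> nat) \<Rightarrow> nat list \<Rightarrow> bool" where
  "legal_dec s b a ls \<longleftrightarrow>
     (\<forall>i\<in>set ls. 1 \<le> i) \<and>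
     sorted_wrt (>) (map a ls) \<and>
     (\<forall>i. i + 1 < length ls \<longrightarrow>
        (\<forall>j::int. \<not> ({a (ls ! i), a (ls ! (i + 1))} \<subseteq> (\<Union>t\<in>{j - int s..j}. gbin b a t))))"

definition has_legal_dec_below :: "nat \<Rightarrow> nat \<Rightarrow> (nat \<Rightarrow> nat) \<Rightarrow> nat \<Rightarrow> nat \<Rightarrow> bool" where
  "has_legal_dec_below s b a i m \<longleftrightarrow>
     (\<exists>ls. legal_dec s b a ls \<and> set ls \<subseteq> {1..<i} \<and> sum_list (map a ls) = m)"

definition is_generacci :: "nat \<Rightarrow> nat \<Rightarrow> (nat \<Rightarrow> nat) \<Rightarrow> bool" where
  "is_generacci s b a \<longleftrightarrow>
     (\<forall>i j. 1 \<le> i \<longrightarrow> i < j \<longrightarrow> a i < a j) \<and>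
     (\<forall>i. 1 \<le> i \<longrightarrow> a i = (LEAST m. 0 < m \<and> \<not> has_legal_dec_below s b a i m))"

definition dec_len :: "nat \<Rightarrow> nat \<Rightarrow> (nat \<Rightarrow> nat) \<Rightarrow> nat \<Rightarrow> nat \<Rightarrow> bool" where
  "dec_len s b a m k \<longleftrightarrow>
     (\<exists>ls. legal_dec s b a ls \<and> sum_list (map a ls) = m \<and> length ls = k)"

definition gen_p :: "nat \<Rightarrow> nat \<Rightarrow> (nat \<Rightarrow> nat) \<Rightarrow> nat \<Rightarrow> nat \<Rightarrow> nat" where
  "gen_p s b a n k = card {m. gen_at a ((int n - 1) * int b + 1) \<le> m \<and>
                            m < gen_at a (int n * int b + 1) \<and> dec_len s b a m k}"

definition gen_q :: "nat \<Rightarrow> nat \<Rightarrow> (nat \<Rightarrow> nat) \<Rightarrow> nat \<Rightarrow> nat \<Rightarrow> nat" where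
  "gen_q s b a n k = card {m. m < gen_at a (int n * int b + 1) \<and> dec_len s b a m k}"

end

theory Submission
  imports Defs
begin

unbundle fps_syntax

text \<open>
  Legality only depends on the bins \<lceil>l/b\<rceil> of the indices l of the summands: consecutive
  summands must lie at least s + 1 bins apart.  By induction on i, the values of the legal index
  lists below i fill [0, a_i) bijectively: such a list below j + 1 either avoids j or is j
  followed by a list below bin \<lceil>j/b\<rceil> - s, and the minimality of a_(j+1) makes it the sum of
  the two resulting ranges.  Consequently the numbers in [a_((n-1)b+1), a_(nb+1)) are those whose
  largest summand lies in bin n; there are b choices for that summand, and the other k - 1
  summands form an arbitrary legal decomposition below bin n - s, so p(n,k) = b q(n-s-1, k-1).
  As q(m) is the partial sum of the p(j), the polynomials P_n(y) = \<Sum>_k p(n,k) y^k satisfy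
  P_n = P_(n-1) + b y P_(n-s-1) for n > s + 1, with P_0 = 1 and P_n = b y for 1 \<le> n \<le> s + 1,
  which is the stated rational generating function.
\<close>

text \<open>\<open>bin_of b l = \<lceil>l/b\<rceil>\<close> is the index of the bin containing \<open>a\<^sub>l\<close>.\<close>

definition bin_of :: "nat \<Rightarrow> nat \<Rightarrow> nat" where
  "bin_of b l = (l + b - 1) div b"

lemma bin_of_le_iff:
  assumes "1 \<le> b"
  shows "bin_of b l \<le> q \<longleftrightarrow> l \<le> b * q"
proof -
  have "bin_of b l \<le> q \<longleftrightarrow> l + b - 1 < Suc q * b"
    using assms unfolding bin_of_def by (simp add: less_Suc_eq_le[symmetric] div_less_iff_less_mult)
  also have "\<dots> \<longleftrightarrow> l \<le> b * q" using assms by (auto simp: algebra_simps)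
  finally show ?thesis .
qed

lemma bin_of_mono: "l \<le> l' \<Longrightarrow> bin_of b l \<le> bin_of b l'"
  unfolding bin_of_def by (simp add: div_le_mono)

lemma bin_of_pos: "1 \<le> b \<Longrightarrow> 1 \<le> l \<Longrightarrow> 1 \<le> bin_of b l"
  using bin_of_le_iff[of b l 0] by simp

lemma bin_of_eqI:
  assumes "1 \<le> b" "(n - 1) * b < l" "l \<le> n * b"
  shows "bin_of b l = n"
  using bin_of_le_iff[OF assms(1), of l n] bin_of_le_iff[OF assms(1), of l "n - 1"] assms(2,3)
  by (simp add: mult.commute)

lemma bin_of_below_lt:
  assumes "1 \<le> b" "1 \<le> l"
  shows "b * (bin_of b l - Suc d) < l"
proof -
  have "\<not> bin_of b l \<le> bin_of b l - 1" using bin_of_pos[OF assms] by linarith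
  hence "b * (bin_of b l - 1) < l" using bin_of_le_iff[OF assms(1)] by (simp add: not_le)
  moreover have "b * (bin_of b l - Suc d) \<le> b * (bin_of b l - 1)" by (intro mult_le_mono2) simp
  ultimately show ?thesis by linarith
qed

lemma int_bin_range_iff:
  assumes "1 \<le> b" "1 \<le> l"
  shows "(0 < t \<and> int b * (t - 1) + 1 \<le> int l \<and> int l \<le> int b * t) \<longleftrightarrow> t = int (bin_of b l)"
proof
  assume t: "0 < t \<and> int b * (t - 1) + 1 \<le> int l \<and> int l \<le> int b * t"
  then obtain n where n: "t = int n" "1 \<le> n" by (auto elim: pos_int_cases)
  have "int (b * (n - 1) + 1) \<le> int l" "int l \<le> int (b * n)" using t n by (simp_all add: of_nat_diff)
  hence "(n - 1) * b < l" "l \<le> n * b" unfolding of_nat_le_iff by (simp_all add: mult.commute)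
  thus "t = int (bin_of b l)" using bin_of_eqI[OF assms(1)] n(1) by simp
next
  assume t: "t = int (bin_of b l)"
  define n where "n = bin_of b l"
  have n: "1 \<le> n" "l \<le> b * n" "\<not> l \<le> b * (n - 1)"
    using bin_of_pos[OF assms] bin_of_le_iff[OF assms(1), of l n] bin_of_le_iff[OF assms(1), of l "n - 1"]
    unfolding n_def by auto
  hence "int (b * (n - 1) + 1) \<le> int l" "int l \<le> int (b * n)" unfolding of_nat_le_iff by auto
  thus "0 < t \<and> int b * (t - 1) + 1 \<le> int l \<and> int l \<le> int b * t"
    using t n(1) unfolding n_def[symmetric] by (simp add: of_nat_diff)
qed

definition bin_gapped :: "nat \<Rightarrow> nat \<Rightarrow> nat list \<Rightarrow> bool" where
  "bin_gapped s b ls \<longleftrightarrow> (\<forall>l\<in>set ls. 1 \<le> l) \<and> sorted_wrt (\<lambda>l l'. bin_of b l' + s < bin_of b l) ls"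

lemma bin_gapped_Nil [simp]: "bin_gapped s b []"
  by (simp add: bin_gapped_def)

lemma bin_gapped_Cons:
  "bin_gapped s b (l # ls) \<longleftrightarrow> 1 \<le> l \<and> bin_gapped s b ls \<and> (\<forall>l'\<in>set ls. bin_of b l' + s < bin_of b l)"
  by (auto simp: bin_gapped_def)

lemma bin_gapped_pos: "bin_gapped s b ls \<Longrightarrow> l \<in> set ls \<Longrightarrow> 1 \<le> l"
  by (simp add: bin_gapped_def)

lemma bin_gapped_imp_sorted: "bin_gapped s b ls \<Longrightarrow> sorted_wrt (>) ls"
  unfolding bin_gapped_def
proof (elim conjE sorted_wrt_mono_rel[rotated])
  fix l l' assume "bin_of b l' + s < bin_of b l"
  thus "l' < l" using bin_of_mono[of l l' b] by (meson add_lessD1 leD not_less)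
qed

lemma bin_gapped_iff_adjacent:
  "bin_gapped s b ls \<longleftrightarrow> (\<forall>l\<in>set ls. 1 \<le> l) \<and>
     (\<forall>i. Suc i < length ls \<longrightarrow> bin_of b (ls ! Suc i) + s < bin_of b (ls ! i))"
proof -
  have "transp (\<lambda>l l'. bin_of b l' + s < bin_of b l)" by (auto intro: transpI)
  thus ?thesis unfolding bin_gapped_def by (simp add: sorted_wrt_iff_nth_Suc_transp)
qed

lemma bin_gapped_Cons_iff_below:
  assumes "1 \<le> b"
  shows "bin_gapped s b (l # ls) \<longleftrightarrow>
    1 \<le> l \<and> bin_gapped s b ls \<and> set ls \<subseteq> {1..<b * (bin_of b l - Suc s) + 1}"
proof -
  have gap_iff: "bin_of b l' + s < bin_of b l \<longleftrightarrow> l' \<in> {1..<b * (bin_of b l - Suc s) + 1}"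
    if "1 \<le> l'" for l'
    using that bin_of_pos[OF assms that] bin_of_le_iff[OF assms, of l' "bin_of b l - Suc s"] by auto
  have "(\<forall>l'\<in>set ls. bin_of b l' + s < bin_of b l) \<longleftrightarrow> set ls \<subseteq> {1..<b * (bin_of b l - Suc s) + 1}"
    if "bin_gapped s b ls"
    using gap_iff bin_gapped_pos[OF that] by blast
  thus ?thesis unfolding bin_gapped_Cons by blast
qed

lemma bin_gapped_length_lt_bin:
  assumes "1 \<le> b" "bin_gapped s b (l # ls)"
  shows "length ls * (s + 1) < bin_of b l"
  using assms(2)
proof (induction ls arbitrary: l)
  case Nil
  thus ?case using bin_of_pos[OF assms(1), of l] by (simp add: bin_gapped_Cons)
next
  case (Cons l' ls)
  hence "length ls * (s + 1) < bin_of b l'" "bin_of b l' + s < bin_of b l"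
    by (simp_all add: bin_gapped_Cons)
  thus ?case by simp
qed

lemma real_le_divide_iff_mult_le: "real k \<le> real m / real (s + 1) \<longleftrightarrow> k * (s + 1) \<le> m"
proof -
  have "real k \<le> real m / real (s + 1) \<longleftrightarrow> real k * real (s + 1) \<le> real m"
    by (rule pos_le_divide_eq) simp
  also have "\<dots> \<longleftrightarrow> k * (s + 1) \<le> m" by (simp only: of_nat_mult[symmetric] of_nat_le_iff)
  finally show ?thesis .
qed

lemma fps_of_nat_X_mult_nth:
  "(of_nat c * fps_X * f :: 'a::comm_ring_1 fps) $ n = (if n = 0 then 0 else of_nat c * f $ (n - 1))"
proof -
  have "of_nat c * fps_X * f = fps_const (of_nat c) * (fps_X * f)" by (simp add: fps_of_nat mult.assoc)
  thus ?thesis by simp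
qed

lemma fps_mult_inverse_eq_1:
  fixes D :: "'a::field fps fps"
  assumes "D $ 0 = 1"
  shows "D * inverse D = 1"
proof -
  have "inverse D = fps_right_inverse D (inverse (D $ 0))" by (rule fps_inverse_def)
  also have "\<dots> = fps_right_inverse D 1" using assms by simp
  finally show ?thesis using fps_right_inverse[of D 1] assms by simp
qed

locale generacci =
  fixes s b :: nat and a :: "nat \<Rightarrow> nat"
  assumes b_pos: "1 \<le> b" and generacci: "is_generacci s b a"
begin

lemma a_less_iff: "1 \<le> i \<Longrightarrow> 1 \<le> j \<Longrightarrow> a i < a j \<longleftrightarrow> i < j"
  using generacci unfolding is_generacci_def by (metis linorder_neqE_nat less_asym)

lemma a_inj: "1 \<le> i \<Longrightarrow> 1 \<le> j \<Longrightarrow> a i = a j \<Longrightarrow> i = j"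
  using a_less_iff by (metis less_irrefl linorder_neqE_nat)

lemma a_mono: "1 \<le> i \<Longrightarrow> i \<le> j \<Longrightarrow> a i \<le> a j"
  using a_less_iff by (metis le_eq_less_or_eq less_imp_le order_trans)

lemma a_mem_gbin_iff:
  assumes "1 \<le> l"
  shows "a l \<in> gbin b a t \<longleftrightarrow> t = int (bin_of b l)"
proof -
  have "a l \<in> gbin b a t \<longleftrightarrow> 0 < t \<and> int b * (t - 1) + 1 \<le> int l \<and> int l \<le> int b * t"
  proof
    assume "a l \<in> gbin b a t"
    then obtain i where i: "0 < t" "int b * (t - 1) + 1 \<le> int i" "int i \<le> int b * t" "a l = a i"
      unfolding gbin_def by (auto split: if_splits)
    have "0 \<le> int b * (t - 1)" using i(1) by simp
    hence "1 \<le> i" using i(2) by linarith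
    hence "i = l" using a_inj[OF assms] i(4) by simp
    thus "0 < t \<and> int b * (t - 1) + 1 \<le> int l \<and> int l \<le> int b * t" using i by simp
  qed (auto simp: gbin_def)
  also have "\<dots> \<longleftrightarrow> t = int (bin_of b l)" using int_bin_range_iff[OF b_pos assms] .
  finally show ?thesis .
qed

lemma pair_in_adjacent_bins_iff:
  assumes "1 \<le> l" "1 \<le> l'"
  shows "(\<exists>j. {a l, a l'} \<subseteq> (\<Union>t\<in>{j - int s..j}. gbin b a t)) \<longleftrightarrow>
         \<bar>int (bin_of b l) - int (bin_of b l')\<bar> \<le> int s"
proof
  assume "\<bar>int (bin_of b l) - int (bin_of b l')\<bar> \<le> int s"
  thus "\<exists>j. {a l, a l'} \<subseteq> (\<Union>t\<in>{j - int s..j}. gbin b a t)"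
    by (intro exI[of _ "max (int (bin_of b l)) (int (bin_of b l'))"])
      (auto simp: a_mem_gbin_iff[OF assms(1)] a_mem_gbin_iff[OF assms(2)])
qed (auto simp: a_mem_gbin_iff[OF assms(1)] a_mem_gbin_iff[OF assms(2)])

lemma legal_dec_iff_bin_gapped: "legal_dec s b a ls \<longleftrightarrow> bin_gapped s b ls"
proof -
  have separated_iff:
    "(\<forall>j. \<not> {a l, a l'} \<subseteq> (\<Union>t\<in>{j - int s..j}. gbin b a t)) \<longleftrightarrow> bin_of b l' + s < bin_of b l"
    if "1 \<le> l'" "l' < l" for l l'
    using pair_in_adjacent_bins_iff[of l l'] bin_of_mono[of l' l b] that by auto
  have sorted_iff: "sorted_wrt (>) (map a ls) \<longleftrightarrow> sorted_wrt (>) ls" if "\<forall>l\<in>set ls. 1 \<le> l"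
    unfolding sorted_wrt_map using that a_less_iff
    by (intro iffI; elim sorted_wrt_mono_rel[rotated]) auto
  show ?thesis
  proof
    assume legal: "legal_dec s b a ls"
    hence pos: "\<forall>l\<in>set ls. 1 \<le> l" and sorted: "sorted_wrt (>) ls"
      using sorted_iff unfolding legal_dec_def by blast+
    have "bin_of b (ls ! Suc i) + s < bin_of b (ls ! i)" if "Suc i < length ls" for i
      using legal that sorted_wrt_nth_less[OF sorted, of i "Suc i"] pos separated_iff[of "ls ! Suc i" "ls ! i"]
      unfolding legal_dec_def by auto
    thus "bin_gapped s b ls" using pos by (simp add: bin_gapped_iff_adjacent)
  next
    assume gapped: "bin_gapped s b ls"
    hence pos: "\<forall>l\<in>set ls. 1 \<le> l" by (simp add: bin_gapped_def)
    have "sorted_wrt (>) (map a ls)" using sorted_iff[OF pos] bin_gapped_imp_sorted[OF gapped] by blast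
    moreover have "\<forall>j. \<not> {a (ls ! i), a (ls ! Suc i)} \<subseteq> (\<Union>t\<in>{j - int s..j}. gbin b a t)"
      if "Suc i < length ls" for i
      using gapped that sorted_wrt_nth_less[OF bin_gapped_imp_sorted[OF gapped], of i "Suc i"] pos
        separated_iff[of "ls ! Suc i" "ls ! i"]
      unfolding bin_gapped_iff_adjacent by auto
    ultimately show "legal_dec s b a ls" using pos unfolding legal_dec_def by auto
  qed
qed

definition dec_value :: "nat list \<Rightarrow> nat" where
  "dec_value ls = sum_list (map a ls)"

definition legal_below :: "nat \<Rightarrow> nat list set" where
  "legal_below i = {ls. bin_gapped s b ls \<and> set ls \<subseteq> {1..<i}}"

lemma has_legal_dec_below_iff: "has_legal_dec_below s b a i m \<longleftrightarrow> m \<in> dec_value ` legal_below i"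
  unfolding has_legal_dec_below_def legal_below_def dec_value_def legal_dec_iff_bin_gapped by auto

lemma a_eqI:
  assumes "1 \<le> i" "dec_value ` legal_below i = {0..<m}" "0 < m"
  shows "a i = m"
proof -
  have "(LEAST m. 0 < m \<and> \<not> has_legal_dec_below s b a i m) = m"
    by (rule Least_equality) (use assms in \<open>auto simp: has_legal_dec_below_iff\<close>)
  thus ?thesis using generacci assms(1) unfolding is_generacci_def by simp
qed

lemma legal_below_1: "legal_below 1 = {[]}"
  unfolding legal_below_def by auto

lemma legal_below_Suc:
  assumes "1 \<le> j"
  shows "legal_below (Suc j) = legal_below j \<union> Cons j ` legal_below (b * (bin_of b j - Suc s) + 1)"
proof -
  define l where "l = b * (bin_of b j - Suc s) + 1"
  have top_or_below: "ls \<in> legal_below j \<or> (\<exists>r. ls = j # r)" if ls: "ls \<in> legal_below (Suc j)" for ls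
  proof (cases "j \<in> set ls")
    case False
    thus ?thesis using ls unfolding legal_below_def by (auto simp: less_Suc_eq)
  next
    case True
    then obtain t r where ls_eq: "ls = t # r" by (cases ls) auto
    have "j \<le> t" using True bin_gapped_imp_sorted[of s b ls] ls unfolding ls_eq legal_below_def by auto
    moreover have "t \<le> j" using ls unfolding ls_eq legal_below_def by auto
    ultimately show ?thesis using ls_eq by auto
  qed
  have "l \<le> j" using bin_of_below_lt[OF b_pos assms, of s] unfolding l_def by simp
  moreover have cons_iff: "bin_gapped s b (j # r) \<longleftrightarrow> bin_gapped s b r \<and> set r \<subseteq> {1..<l}" for r
    unfolding l_def bin_gapped_Cons_iff_below[OF b_pos] using assms by simp
  ultimately have "Cons j ` legal_below l \<subseteq> legal_below (Suc j)"
    using assms unfolding legal_below_def by auto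
  moreover have "ls \<in> Cons j ` legal_below l" if ls: "ls \<in> legal_below (Suc j)" "ls \<notin> legal_below j" for ls
  proof -
    obtain r where "ls = j # r" using top_or_below[OF ls(1)] ls(2) by blast
    thus ?thesis using ls(1) cons_iff unfolding legal_below_def by (auto intro: imageI)
  qed
  moreover have "legal_below j \<subseteq> legal_below (Suc j)" unfolding legal_below_def by auto
  ultimately show ?thesis unfolding l_def[symmetric] by blast
qed

theorem bij_betw_dec_value: "1 \<le> i \<Longrightarrow> bij_betw dec_value (legal_below i) {0..<a i}"
proof (induction i rule: less_induct)
  case (less i)
  show ?case
  proof (cases "i = 1")
    case True
    have "dec_value ` legal_below 1 = {0..<1}" unfolding legal_below_1 by (simp add: dec_value_def)
    hence "a 1 = 1" using a_eqI[of 1 1] by simp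
    thus ?thesis unfolding True bij_betw_def legal_below_1 by (simp add: dec_value_def)
  next
    case False
    obtain j where j: "i = Suc j" "1 \<le> j" by (intro that[of "i - 1"]) (use False less.prems in auto)
    define l where "l = b * (bin_of b j - Suc s) + 1"
    have l: "1 \<le> l" "l < i" using bin_of_below_lt[OF b_pos j(2), of s] j unfolding l_def by auto
    have bij_j: "bij_betw dec_value (legal_below j) {0..<a j}" using less.IH j by simp
    have bij_l: "bij_betw dec_value (legal_below l) {0..<a l}" using less.IH l by simp
    have shift: "bij_betw ((+) (a j)) {0..<a l} {a j..<a j + a l}"
      by (auto simp: bij_betw_def inj_on_def add.commute)
    have cons: "bij_betw (Cons j) (legal_below l) (Cons j ` legal_below l)"
      by (simp add: bij_betw_imageI)
    have "dec_value \<circ> Cons j = (+) (a j) \<circ> dec_value" by (auto simp: dec_value_def)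
    hence bij_cons: "bij_betw dec_value (Cons j ` legal_below l) {a j..<a j + a l}"
      using bij_betw_trans[OF bij_l shift] by (simp add: bij_betw_comp_iff[OF cons])
    have "[] \<in> legal_below l" by (simp add: legal_below_def)
    hence "0 < a l" using bij_betwE[OF bij_l] by (fastforce simp: dec_value_def)
    have "bij_betw dec_value (legal_below i) ({0..<a j} \<union> {a j..<a j + a l})"
      unfolding j(1) legal_below_Suc[OF j(2)] l_def[symmetric]
      by (rule bij_betw_combine[OF bij_j bij_cons]) auto
    moreover have "{0..<a j} \<union> {a j..<a j + a l} = {0..<a j + a l}" by auto
    ultimately have "bij_betw dec_value (legal_below i) {0..<a j + a l}" by simp
    moreover from this have "a i = a j + a l"
      using a_eqI[of i] \<open>0 < a l\<close> j by (simp add: bij_betw_def)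
    ultimately show ?thesis by simp
  qed
qed

lemma dec_value_less_a_iff:
  assumes "bin_gapped s b ls" "1 \<le> i"
  shows "dec_value ls < a i \<longleftrightarrow> set ls \<subseteq> {1..<i}"
proof
  assume "set ls \<subseteq> {1..<i}"
  hence "ls \<in> legal_below i" using assms(1) unfolding legal_below_def by simp
  thus "dec_value ls < a i" using bij_betwE[OF bij_betw_dec_value[OF assms(2)]] by auto
next
  assume less: "dec_value ls < a i"
  have "l < i" if "l \<in> set ls" for l
  proof -
    have "a l \<le> dec_value ls" using that unfolding dec_value_def by (simp add: member_le_sum_list)
    thus ?thesis using less a_mono[OF assms(2), of l] by (meson le_less_trans not_le)
  qed
  thus "set ls \<subseteq> {1..<i}" using bin_gapped_pos[OF assms(1)] by auto
qed

lemma inj_on_dec_value: "inj_on dec_value {ls. bin_gapped s b ls}"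
proof (rule inj_onI)
  fix ls ls' assume ls: "ls \<in> {ls. bin_gapped s b ls}" "ls' \<in> {ls. bin_gapped s b ls}"
    and eq: "dec_value ls = dec_value ls'"
  define i where "i = Suc (Max (set ls \<union> set ls'))"
  have "ls \<in> legal_below i" "ls' \<in> legal_below i"
    using ls bin_gapped_pos unfolding legal_below_def i_def by (auto simp: le_imp_less_Suc)
  thus "ls = ls'" using bij_betw_dec_value[of i] eq unfolding i_def
    by (auto dest: bij_betw_imp_inj_on inj_onD)
qed

definition legal_below_len :: "nat \<Rightarrow> nat \<Rightarrow> nat list set" where
  "legal_below_len i k = {ls \<in> legal_below i. length ls = k}"

lemma finite_legal_below_len: "finite (legal_below_len i k)"
proof -
  have "legal_below_len i k \<subseteq> {ls. set ls \<subseteq> {1..<i} \<and> length ls = k}"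
    unfolding legal_below_len_def legal_below_def by auto
  thus ?thesis using finite_lists_length_eq[of "{1..<i}" k] finite_subset by auto
qed

lemma legal_below_len_mono: "i \<le> j \<Longrightarrow> legal_below_len i k \<subseteq> legal_below_len j k"
  unfolding legal_below_len_def legal_below_def by auto

lemma legal_below_len_1: "legal_below_len 1 k = (if k = 0 then {[]} else {})"
  unfolding legal_below_len_def legal_below_1 by auto

lemma legal_below_len_0: "1 \<le> i \<Longrightarrow> legal_below_len i 0 = {[]}"
  unfolding legal_below_len_def legal_below_def by auto

lemma decs_below_a_eq_image:
  assumes "1 \<le> i"
  shows "{m. m < a i \<and> dec_len s b a m k} = dec_value ` legal_below_len i k"
  unfolding dec_len_def legal_dec_iff_bin_gapped legal_below_len_def legal_below_def
  using dec_value_less_a_iff[OF _ assms] by (auto simp: dec_value_def)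

lemma inj_on_legal_below_len: "inj_on dec_value (legal_below_len i k)"
  by (rule inj_on_subset[OF inj_on_dec_value]) (auto simp: legal_below_len_def legal_below_def)

lemma gen_at_of_nat: "1 \<le> j \<Longrightarrow> gen_at a (int j) = a j"
  unfolding gen_at_def by simp

lemma gen_at_bin_start: "gen_at a (int n * int b + 1) = a (n * b + 1)"
proof -
  have eq: "int n * int b + 1 = int (n * b + 1)" by simp
  show ?thesis unfolding eq by (rule gen_at_of_nat) simp
qed

lemma gen_q_eq_card: "gen_q s b a n k = card (legal_below_len (n * b + 1) k)"
  unfolding gen_q_def gen_at_bin_start using decs_below_a_eq_image[of "n * b + 1" k]
  by (simp add: card_image inj_on_legal_below_len)

lemma gen_p_eq_card:
  assumes "1 \<le> n"
  shows "gen_p s b a n k = card (legal_below_len (n * b + 1) k - legal_below_len ((n - 1) * b + 1) k)"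
proof -
  have eq: "(int n - 1) * int b + 1 = int ((n - 1) * b + 1)" using assms by (simp add: of_nat_diff)
  have lo: "gen_at a ((int n - 1) * int b + 1) = a ((n - 1) * b + 1)"
    unfolding eq by (rule gen_at_of_nat) simp
  have sub: "legal_below_len ((n - 1) * b + 1) k \<subseteq> legal_below_len (n * b + 1) k"
    by (rule legal_below_len_mono) simp
  have "{m. a ((n - 1) * b + 1) \<le> m \<and> m < a (n * b + 1) \<and> dec_len s b a m k}
      = {m. m < a (n * b + 1) \<and> dec_len s b a m k} - {m. m < a ((n - 1) * b + 1) \<and> dec_len s b a m k}"
    by auto
  also have "\<dots> = dec_value ` (legal_below_len (n * b + 1) k - legal_below_len ((n - 1) * b + 1) k)"
    unfolding decs_below_a_eq_image[OF le_add2]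
    by (rule inj_on_image_set_diff[OF inj_on_legal_below_len Diff_subset sub, symmetric])
  finally show ?thesis unfolding gen_p_def lo gen_at_bin_start
    by (simp add: card_image[OF inj_on_subset[OF inj_on_legal_below_len Diff_subset]])
qed

lemma gen_q_0: "gen_q s b a 0 k = (if k = 0 then 1 else 0)"
  using legal_below_len_1 by (simp add: gen_q_eq_card)

lemma gen_p_0: "gen_p s b a 0 k = (if k = 0 then 1 else 0)"
proof -
  have "gen_at a ((int 0 - 1) * int b + 1) = 0" using b_pos unfolding gen_at_def by simp
  moreover have "gen_at a (int 0 * int b + 1) = a 1" unfolding gen_at_def by simp
  ultimately have "gen_p s b a 0 k = gen_q s b a 0 k" unfolding gen_p_def gen_q_def by simp
  thus ?thesis by (simp add: gen_q_0)
qed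

lemma gen_q_Suc: "gen_q s b a (Suc m) k = gen_q s b a m k + gen_p s b a (Suc m) k"
proof -
  have "legal_below_len (m * b + 1) k \<subseteq> legal_below_len (Suc m * b + 1) k"
    by (rule legal_below_len_mono) simp
  thus ?thesis using card_Diff_subset[OF finite_legal_below_len] card_mono[OF finite_legal_below_len]
    by (simp add: gen_q_eq_card gen_p_eq_card)
qed

lemma Cons_mem_top_bin_iff:
  assumes "1 \<le> n"
  shows "t # r \<in> legal_below_len (n * b + 1) (Suc k) - legal_below_len ((n - 1) * b + 1) (Suc k) \<longleftrightarrow>
    t \<in> {(n - 1) * b + 1..n * b} \<and> r \<in> legal_below_len ((n - Suc s) * b + 1) k"
    (is "_ \<in> ?top \<longleftrightarrow> _")
proof -
  have gapped_Cons: "bin_gapped s b (t # r) \<longleftrightarrow> bin_gapped s b r \<and> set r \<subseteq> {1..<(n - Suc s) * b + 1}"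
    if "t \<in> {(n - 1) * b + 1..n * b}"
  proof -
    have "bin_of b t = n" using bin_of_eqI[OF b_pos] that by simp
    thus ?thesis using bin_gapped_Cons_iff_below[OF b_pos] that by (auto simp: mult.commute)
  qed
  show ?thesis
  proof
    assume top: "t # r \<in> ?top"
    hence gapped: "bin_gapped s b (t # r)" and "t \<le> n * b" and len: "length r = k"
      unfolding legal_below_len_def legal_below_def by auto
    moreover have "\<not> set (t # r) \<subseteq> {1..<(n - 1) * b + 1}"
      using top gapped len unfolding legal_below_len_def legal_below_def by auto
    then obtain l where l: "l \<in> set (t # r)" "l \<notin> {1..<(n - 1) * b + 1}" by blast
    have "(n - 1) * b + 1 \<le> l" using bin_gapped_pos[OF gapped l(1)] l(2) by auto
    hence "(n - 1) * b + 1 \<le> t" using bin_gapped_imp_sorted[OF gapped] l(1) by auto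
    ultimately show "t \<in> {(n - 1) * b + 1..n * b} \<and> r \<in> legal_below_len ((n - Suc s) * b + 1) k"
      using gapped_Cons unfolding legal_below_len_def legal_below_def by auto
  next
    assume cons: "t \<in> {(n - 1) * b + 1..n * b} \<and> r \<in> legal_below_len ((n - Suc s) * b + 1) k"
    hence "bin_gapped s b (t # r)" "length r = k"
      using gapped_Cons unfolding legal_below_len_def legal_below_def by auto
    moreover have "set r \<subseteq> {1..<t}"
      using \<open>bin_gapped s b (t # r)\<close> bin_gapped_imp_sorted bin_gapped_pos by fastforce
    ultimately show "t # r \<in> ?top" using cons unfolding legal_below_len_def legal_below_def by auto
  qed
qed

lemma legal_below_len_top_bin:
  assumes "1 \<le> n"
  shows "legal_below_len (n * b + 1) (Suc k) - legal_below_len ((n - 1) * b + 1) (Suc k) =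
    (\<lambda>(t, r). t # r) ` ({(n - 1) * b + 1..n * b} \<times> legal_below_len ((n - Suc s) * b + 1) k)"
    (is "?top = ?cons")
proof (intro equalityI subsetI)
  fix ls assume ls: "ls \<in> ?top"
  then obtain t r where tr: "ls = t # r" unfolding legal_below_len_def by (cases ls) auto
  hence "(t, r) \<in> {(n - 1) * b + 1..n * b} \<times> legal_below_len ((n - Suc s) * b + 1) k"
    using ls Cons_mem_top_bin_iff[OF assms] by blast
  thus "ls \<in> ?cons" by (rule rev_image_eqI) (simp add: tr)
next
  fix ls assume "ls \<in> ?cons"
  then obtain t r where "ls = t # r"
    "(t, r) \<in> {(n - 1) * b + 1..n * b} \<times> legal_below_len ((n - Suc s) * b + 1) k"
    by (auto elim!: imageE)
  thus "ls \<in> ?top" using Cons_mem_top_bin_iff[OF assms] by blast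
qed

lemma gen_p_Suc:
  assumes "1 \<le> n"
  shows "gen_p s b a n (Suc k) = b * gen_q s b a (n - Suc s) k"
proof -
  have "card {(n - 1) * b + 1..n * b} = b" using assms by (cases n) auto
  moreover have "inj (\<lambda>(t, r). t # r :: nat list)" by (auto intro: injI)
  ultimately show ?thesis
    unfolding gen_p_eq_card[OF assms] legal_below_len_top_bin[OF assms] gen_q_eq_card
    by (simp add: card_image inj_on_subset card_cartesian_product)
qed

lemma gen_p_0_right: "1 \<le> n \<Longrightarrow> gen_p s b a n 0 = 0"
  by (simp add: gen_p_eq_card legal_below_len_0)

lemma gen_q_nonzero_imp: "gen_q s b a m k \<noteq> 0 \<Longrightarrow> k * (s + 1) \<le> m + s"
proof (cases k)
  case (Suc k')
  assume "gen_q s b a m k \<noteq> 0"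
  then obtain ls where ls: "ls \<in> legal_below_len (m * b + 1) k"
    unfolding gen_q_eq_card by (metis card.empty ex_in_conv)
  then obtain t r where tr: "ls = t # r" using Suc unfolding legal_below_len_def by (cases ls) auto
  have "bin_gapped s b (t # r)" "t \<le> m * b" "length r = k'"
    using ls Suc unfolding tr legal_below_len_def legal_below_def by auto
  moreover from this have "bin_of b t \<le> m" using bin_of_le_iff[OF b_pos] by (simp add: mult.commute)
  ultimately show ?thesis using bin_gapped_length_lt_bin[OF b_pos] Suc by fastforce
qed simp

lemma gen_p_nonzero_imp: "gen_p s b a n k \<noteq> 0 \<Longrightarrow> k * (s + 1) \<le> n + s"
proof (cases "n = 0")
  case True
  thus "gen_p s b a n k \<noteq> 0 \<Longrightarrow> k * (s + 1) \<le> n + s" by (simp add: gen_p_0 split: if_splits)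
next
  case False
  assume p: "gen_p s b a n k \<noteq> 0"
  then obtain k' where k: "k = Suc k'" using False gen_p_0_right by (cases k) auto
  hence "k' * (s + 1) \<le> n - Suc s + s" using p False gen_p_Suc gen_q_nonzero_imp by simp
  moreover have "k' = 0" if "n \<le> s" using calculation that by (cases k') auto
  ultimately show ?thesis using False k by (cases "n \<le> s") auto
qed

lemma gen_p_formula:
  "gen_p s b a n k =
     (if n = 0 \<and> k = 0 then 1
      else if 1 \<le> n \<and> n \<le> s \<and> k = 1 then b
      else if s + 1 \<le> n \<and> 1 \<le> k \<and> real k \<le> real (n + s) / real (s + 1)
        then b * gen_q s b a (n - (s + 1)) (k - 1)
      else 0)"
proof (cases "n = 0")
  case True
  thus ?thesis by (simp add: gen_p_0)
next
  case False
  show ?thesis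
  proof (cases k)
    case 0
    thus ?thesis using False gen_p_0_right by simp
  next
    case (Suc k')
    have p: "gen_p s b a n k = b * gen_q s b a (n - Suc s) k'" using Suc False gen_p_Suc by simp
    show ?thesis
    proof (cases "n \<le> s")
      case True
      thus ?thesis using p Suc False by (simp add: gen_q_0)
    next
      case False
      moreover have "gen_p s b a n k = 0" if "\<not> k * (s + 1) \<le> n + s"
        using that gen_p_nonzero_imp by blast
      ultimately show ?thesis unfolding real_le_divide_iff_mult_le using p Suc \<open>n \<noteq> 0\<close> by auto
    qed
  qed
qed

lemma gen_p_le_ceiling:
  assumes "gen_p s b a n k \<noteq> 0"
  shows "k \<le> nat \<lceil>real (n + s) / real (s + 1)\<rceil>"
proof -
  have "real k \<le> real (n + s) / real (s + 1)"
    using gen_p_nonzero_imp[OF assms] real_le_divide_iff_mult_le by blast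
  also have "\<dots> \<le> of_int \<lceil>real (n + s) / real (s + 1)\<rceil>" by (rule le_of_int_ceiling)
  finally show ?thesis by linarith
qed

definition p_poly :: "nat \<Rightarrow> real fps" where
  "p_poly n = Abs_fps (\<lambda>k. real (gen_p s b a n k))"

definition q_poly :: "nat \<Rightarrow> real fps" where
  "q_poly n = Abs_fps (\<lambda>k. real (gen_q s b a n k))"

lemma p_poly_0: "p_poly 0 = 1"
  by (rule fps_ext) (simp add: p_poly_def gen_p_0)

lemma q_poly_0: "q_poly 0 = 1"
  by (rule fps_ext) (simp add: q_poly_def gen_q_0)

lemma q_poly_Suc: "q_poly (Suc m) = q_poly m + p_poly (Suc m)"
  by (rule fps_ext) (simp add: q_poly_def p_poly_def gen_q_Suc)

lemma p_poly_eq: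
  assumes "1 \<le> n"
  shows "p_poly n = of_nat b * fps_X * q_poly (n - Suc s)"
proof (rule fps_ext)
  fix k
  show "p_poly n $ k = (of_nat b * fps_X * q_poly (n - Suc s)) $ k"
    using assms
    by (cases k) (simp_all add: fps_of_nat_X_mult_nth p_poly_def q_poly_def gen_p_Suc gen_p_0_right)
qed

lemma p_poly_low: "1 \<le> n \<Longrightarrow> n \<le> Suc s \<Longrightarrow> p_poly n = of_nat b * fps_X"
  by (simp add: p_poly_eq q_poly_0)

lemma p_poly_high:
  assumes "Suc s < n"
  shows "p_poly n = p_poly (n - 1) + of_nat b * fps_X * p_poly (n - Suc s)"
proof -
  have "n - Suc s = Suc (n - 1 - Suc s)" "1 \<le> n - 1" using assms by auto
  thus ?thesis using assms by (simp add: p_poly_eq q_poly_Suc distrib_left)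
qed

lemma Abs_fps_truncated_eq:
  "(Abs_fps (\<lambda>n. Abs_fps (\<lambda>k.
      if k \<le> nat \<lceil>real (n + s) / real (s + 1)\<rceil> then real (gen_p s b a n k) else 0)) :: real fps fps)
    = Abs_fps p_poly"
proof -
  have "(if k \<le> nat \<lceil>real (n + s) / real (s + 1)\<rceil> then real (gen_p s b a n k) else 0)
      = real (gen_p s b a n k)" for n k
    using gen_p_le_ceiling[of n k] by auto
  thus ?thesis unfolding p_poly_def by simp
qed

lemma generating_function:
  assumes "1 \<le> s"
  shows "Abs_fps p_poly = 1 + fps_const (of_nat b * fps_X) * fps_X
    * inverse (1 - fps_X - fps_const (of_nat b * fps_X) * fps_X ^ (s + 1))"
proof -
  define C :: "real fps fps" where "C = fps_const (of_nat b * fps_X)"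
  define D where "D = 1 - fps_X - C * fps_X ^ (s + 1)"
  define F where "F = Abs_fps p_poly"
  have "F * D = D + C * fps_X"
  proof (rule fps_ext)
    fix n
    have FD: "F * D = F - fps_X * F - C * (fps_X ^ (s + 1) * F)" by (simp add: D_def algebra_simps)
    have XF: "(fps_X * F) $ n = (if n = 0 then 0 else p_poly (n - 1))" by (simp add: F_def)
    have XsF: "(fps_X ^ (s + 1) * F) $ n = (if n < s + 1 then 0 else p_poly (n - (s + 1)))"
      by (simp only: fps_X_power_mult_nth F_def fps_nth_Abs_fps)
    have lhs: "(F * D) $ n = p_poly n - (if n = 0 then 0 else p_poly (n - 1))
        - (if n < s + 1 then 0 else of_nat b * fps_X * p_poly (n - (s + 1)))"
      unfolding FD fps_sub_nth XF C_def fps_mult_left_const_nth XsF by (simp add: F_def)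
    have rhs: "(D + C * fps_X) $ n = (if n = 0 then 1 else 0) - (if n = 1 then 1 else 0)
        - (if n = s + 1 then of_nat b * fps_X else 0) + (if n = 1 then of_nat b * fps_X else 0)"
      by (simp add: D_def C_def) arith
    consider "n = 0" | "n = 1" | "2 \<le> n" "n \<le> s" | "n = s + 1" | "s + 1 < n" using assms by linarith
    thus "(F * D) $ n = (D + C * fps_X) $ n"
      unfolding lhs rhs by cases (use assms in \<open>simp_all add: p_poly_0 p_poly_low p_poly_high\<close>)
  qed
  moreover have inv: "D * inverse D = 1" by (rule fps_mult_inverse_eq_1) (simp add: D_def C_def)
  ultimately have "F = (D + C * fps_X) * inverse D" by (metis mult.assoc mult_1_right)
  also have "\<dots> = 1 + C * fps_X * inverse D" using inv by (simp add: distrib_right)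
  finally show ?thesis unfolding F_def C_def D_def .
qed

end

theorem proposition2p13:
  fixes s b :: nat and a :: "nat \<Rightarrow> nat"
  assumes "1 \<le> s" and "1 \<le> b"
    and "is_generacci s b a"
  shows "(\<forall>n k. gen_p s b a n k =
            (if n = 0 \<and> k = 0 then 1
             else if 1 \<le> n \<and> n \<le> s \<and> k = 1 then b
             else if s + 1 \<le> n \<and> 1 \<le> k \<and> real k \<le> real (n + s) / real (s + 1)
               then b * gen_q s b a (n - (s + 1)) (k - 1)
             else 0))
       \<and> (Abs_fps (\<lambda>n. Abs_fps (\<lambda>k.
              if k \<le> nat \<lceil>real (n + s) / real (s + 1)\<rceil> then real (gen_p s b a n k) else 0))
            :: real fps fps)
         = 1 + fps_const (of_nat b * fps_X) * fps_X
               * inverse (1 - fps_X - fps_const (of_nat b * fps_X) * fps_X ^ (s + 1))"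
proof -
  interpret generacci s b a using assms(2,3) by unfold_locales
  show ?thesis using gen_p_formula Abs_fps_truncated_eq generating_function[OF assms(1)] by simp
qed

end
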